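(* Define $\mu:[0,\infty)\to\mathbb R$ by $\mu(0)=0$ and, for $s>0$, $\mu(s)=\dfrac{\cosh s-\cos s-\sin s\,\sinh s}{\sin^2\frac{s}{2}\,(\sinh s-s)-\sinh^2\frac{s}{2}\,(\sin s-s)}$. Then $\mu$ is nonnegative, has countably many points $0=s_0<s_1<s_2<\dots$ where it vanishes, and on each interval $(s_k,s_{k+1})$, $k=0,1,2,\dots$, $\mu$ has a unique critical point $m_k$; on each such interval $\mu$ strictly increases from $0$ to $\mu(m_k)$ and then strictly decreases from $\mu(m_k)$ to $0$. *)

theory Defs
  imports "HOL-Analysis.Analysis"
begin

definition mu :: "real \<Rightarrow> real" where
  "mu s = (if s = 0 then 0 else
     (cosh s - cos s - sin s * sinh s) /
     ((sin (s/2))^2 * (sinh s - s) - (sinh (s/2))^2 * (sin s - s)))"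

end

theory Submission
  imports Defs "HOL-Real_Asymp.Real_Asymp"
begin

text \<open>
  With x = 2t one has mu(2t) = W(t)^2 / P(t), where W = cos sinh - sin cosh is the Wronskian
  of sinh and sin and P > 0 on (0, infinity). Hence mu >= 0, and its zeros are 0 and twice the
  zeros of W, of which there is exactly one in each interval (n pi, (n+1) pi), n >= 1, because
  W = sin sinh (cot - coth) and cot - coth decreases strictly there. Differentiating, mu'(2t) is
  a positive multiple of F = (log (|W| / sqrt E))' with E = sinh^2 - sin^2, and
  F' = 2 W^2 / E^2 - 2 E / W^2 < 0 because W^4 < E^3. So F decreases strictly between
  consecutive zeros of W, and by Rolle's theorem mu has exactly one critical point between
  consecutive zeros, increasing before it and decreasing after it.
\<close>

lemma nonneg_if_deriv_nonneg:
  fixes f f' :: "real \<Rightarrow> real"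
  assumes "0 \<le> t" "0 \<le> f 0"
    and "\<And>u. 0 \<le> u \<Longrightarrow> u \<le> t \<Longrightarrow> (f has_real_derivative f' u) (at u)"
    and "\<And>u. 0 \<le> u \<Longrightarrow> u \<le> t \<Longrightarrow> 0 \<le> f' u"
  shows "0 \<le> f t"
  using DERIV_nonneg_imp_nondecreasing[OF \<open>0 \<le> t\<close>, of f] assms by force

lemma zero_between_if_opposite_signs:
  fixes f :: "real \<Rightarrow> real"
  assumes "a \<le> b" "continuous_on {a..b} f" "f a * f b < 0"
  shows "\<exists>x. a < x \<and> x < b \<and> f x = 0"
proof -
  have "\<exists>x. a \<le> x \<and> x \<le> b \<and> f x = 0"
  proof (cases "f a \<le> 0")
    case True
    then have "0 \<le> f b" using assms(3) by (simp add: mult_less_0_iff)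
    then show ?thesis using IVT'[of f a 0 b] True assms by blast
  next
    case False
    then have "f b \<le> 0" using assms(3) by (simp add: mult_less_0_iff)
    then show ?thesis using IVT2'[of f b 0 a] False assms by force
  qed
  moreover have "f a \<noteq> 0" "f b \<noteq> 0" using assms(3) by auto
  ultimately show ?thesis by (metis order.order_iff_strict)
qed

lemma strict_mono_on_if_deriv_pos:
  fixes f :: "real \<Rightarrow> real"
  assumes "continuous_on {a..b} f"
    and "\<And>x. a < x \<Longrightarrow> x < b \<Longrightarrow> \<exists>y. (f has_real_derivative y) (at x) \<and> 0 < y"
  shows "strict_mono_on {a..b} f"
proof (rule monotone_onI)
  fix x y assume xy: "x \<in> {a..b}" "y \<in> {a..b}" "x < y"
  show "f x < f y"
  proof (rule DERIV_pos_imp_increasing_open[OF \<open>x < y\<close>])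
    show "continuous_on {x..y} f"
      by (rule continuous_on_subset[OF assms(1)]) (use xy in auto)
    fix u assume "x < u" "u < y"
    with xy show "\<exists>y. (f has_real_derivative y) (at u) \<and> 0 < y"
      by (intro assms(2)) auto
  qed
qed

lemma strict_antimono_on_if_deriv_neg:
  fixes f :: "real \<Rightarrow> real"
  assumes "continuous_on {a..b} f"
    and "\<And>x. a < x \<Longrightarrow> x < b \<Longrightarrow> \<exists>y. (f has_real_derivative y) (at x) \<and> y < 0"
  shows "strict_antimono_on {a..b} f"
proof (rule monotone_onI)
  fix x y assume xy: "x \<in> {a..b}" "y \<in> {a..b}" "x < y"
  show "f y < f x"
  proof (rule DERIV_neg_imp_decreasing_open[OF \<open>x < y\<close>])
    show "continuous_on {x..y} f"
      by (rule continuous_on_subset[OF assms(1)]) (use xy in auto)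
    fix u assume "x < u" "u < y"
    with xy show "\<exists>y. (f has_real_derivative y) (at u) \<and> y < 0"
      by (intro assms(2)) auto
  qed
qed

lemma unimodal_if_deriv_sign_decreasing:
  fixes f g :: "real \<Rightarrow> real"
  assumes "a < b" and cont: "continuous_on {a..b} f" and "f a = f b"
    and deriv: "\<And>x. a < x \<Longrightarrow> x < b \<Longrightarrow> \<exists>c>0. (f has_real_derivative c * g x) (at x)"
    and decr: "\<And>x y. a < x \<Longrightarrow> x < y \<Longrightarrow> y < b \<Longrightarrow> g y < g x"
  shows "(\<exists>!m. a < m \<and> m < b \<and> (f has_real_derivative 0) (at m)) \<and>
         (\<forall>m. a < m \<and> m < b \<and> (f has_real_derivative 0) (at m) \<longrightarrow>
              strict_mono_on {a..m} f \<and> strict_antimono_on {m..b} f)"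
proof -
  have critical: "g m = 0" if m: "a < m" "m < b" "(f has_real_derivative 0) (at m)" for m
  proof -
    obtain c where c: "0 < c" "(f has_real_derivative c * g m) (at m)"
      using deriv[OF m(1,2)] by blast
    then have "c * g m = 0" using DERIV_unique m(3) by blast
    with c show ?thesis by simp
  qed
  have "f differentiable (at x)" if "a < x" "x < b" for x
    using deriv[OF that] by (auto simp: real_differentiable_def)
  then have "\<exists>m. a < m \<and> m < b \<and> (f has_real_derivative 0) (at m)"
    by (rule Rolle[OF \<open>a < b\<close> \<open>f a = f b\<close> cont])
  moreover have "m = m'" if "a < m \<and> m < b \<and> (f has_real_derivative 0) (at m)"
    and "a < m' \<and> m' < b \<and> (f has_real_derivative 0) (at m')" for m m'
  proof (rule ccontr)
    assume "m \<noteq> m'"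
    moreover have "g m = 0" "g m' = 0" using critical that by auto
    ultimately show False
      using that decr[of m m'] decr[of m' m] by (cases "m < m'") auto
  qed
  moreover have "strict_mono_on {a..m} f \<and> strict_antimono_on {m..b} f"
    if m: "a < m" "m < b" "(f has_real_derivative 0) (at m)" for m
  proof
    show "strict_mono_on {a..m} f"
    proof (rule strict_mono_on_if_deriv_pos)
      show "continuous_on {a..m} f" by (rule continuous_on_subset[OF cont]) (use m in auto)
      fix x assume x: "a < x" "x < m"
      then obtain c where "0 < c" "(f has_real_derivative c * g x) (at x)"
        using deriv[of x] m by auto
      moreover have "0 < g x" using decr[of x m] critical[OF m] x m by simp
      ultimately show "\<exists>y. (f has_real_derivative y) (at x) \<and> 0 < y"
        using mult_pos_pos by blast
    qed
    show "strict_antimono_on {m..b} f"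
    proof (rule strict_antimono_on_if_deriv_neg)
      show "continuous_on {m..b} f" by (rule continuous_on_subset[OF cont]) (use m in auto)
      fix x assume x: "m < x" "x < b"
      then obtain c where "0 < c" "(f has_real_derivative c * g x) (at x)"
        using deriv[of x] m by auto
      moreover have "g x < 0" using decr[of m x] critical[OF m] x m by simp
      ultimately show "\<exists>y. (f has_real_derivative y) (at x) \<and> y < 0"
        using mult_pos_neg by blast
    qed
  qed
  ultimately show ?thesis by blast
qed

lemma x_le_sinh:
  assumes "0 \<le> x"
  shows "x \<le> sinh (x::real)"
proof -
  have "0 \<le> (\<lambda>u. sinh u - u) x"
    by (rule nonneg_if_deriv_nonneg[where f="\<lambda>u. sinh u - u" and f'="\<lambda>u. cosh u - 1"])
      (auto intro!: derivative_eq_intros simp: assms cosh_real_ge_1)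
  then show ?thesis by simp
qed

lemma one_minus_half_sq_le_cos:
  assumes "0 \<le> x"
  shows "1 - x^2/2 \<le> cos (x::real)"
proof -
  have "0 \<le> (\<lambda>u. cos u - 1 + u^2/2) x"
    by (rule nonneg_if_deriv_nonneg[where f="\<lambda>u. cos u - 1 + u^2/2" and f'="\<lambda>u. u - sin u"])
      (auto intro!: derivative_eq_intros simp: assms sin_x_le_x)
  then show ?thesis by simp
qed

lemma one_plus_half_sq_le_cosh:
  assumes "0 \<le> x"
  shows "1 + x^2/2 \<le> cosh (x::real)"
proof -
  have "0 \<le> (\<lambda>u. cosh u - 1 - u^2/2) x"
    by (rule nonneg_if_deriv_nonneg[where f="\<lambda>u. cosh u - 1 - u^2/2" and f'="\<lambda>u. sinh u - u"])
      (auto intro!: derivative_eq_intros simp: assms x_le_sinh)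
  then show ?thesis by simp
qed

lemma x_plus_cube_le_sinh:
  assumes "0 \<le> x"
  shows "x + x^3/6 \<le> sinh (x::real)"
proof -
  have "0 \<le> (\<lambda>u. sinh u - u - u^3/6) x"
    by (rule nonneg_if_deriv_nonneg[where f="\<lambda>u. sinh u - u - u^3/6" and f'="\<lambda>u. cosh u - 1 - u^2/2"])
      (auto intro!: derivative_eq_intros simp: assms dest: one_plus_half_sq_le_cosh)
  then show ?thesis by simp
qed

lemma double_le_sinh_plus_sin:
  assumes "0 \<le> x"
  shows "2 * x \<le> sinh x + sin (x::real)"
proof -
  have "0 \<le> (\<lambda>u. sinh u + sin u - 2 * u) x"
    by (rule nonneg_if_deriv_nonneg[where f="\<lambda>u. sinh u + sin u - 2 * u" and f'="\<lambda>u. cosh u + cos u - 2"])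
      (auto intro!: derivative_eq_intros simp: assms
        intro: order.trans[OF _ add_mono[OF one_plus_half_sq_le_cosh one_minus_half_sq_le_cos]])
  then show ?thesis by simp
qed

lemma sq_le_cosh_minus_cos:
  assumes "0 \<le> x"
  shows "x^2 \<le> cosh x - cos (x::real)"
proof -
  have "0 \<le> (\<lambda>u. cosh u - cos u - u^2) x"
    by (rule nonneg_if_deriv_nonneg[where f="\<lambda>u. cosh u - cos u - u^2" and f'="\<lambda>u. sinh u + sin u - 2 * u"])
      (auto intro!: derivative_eq_intros simp: assms double_le_sinh_plus_sin)
  then show ?thesis by simp
qed

lemma third_cube_le_sinh_minus_sin:
  assumes "0 \<le> x"
  shows "x^3/3 \<le> sinh x - sin (x::real)"
proof -
  have "0 \<le> (\<lambda>u. sinh u - sin u - u^3/3) x"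
    by (rule nonneg_if_deriv_nonneg[where f="\<lambda>u. sinh u - sin u - u^3/3" and f'="\<lambda>u. cosh u - cos u - u^2"])
      (auto intro!: derivative_eq_intros simp: assms sq_le_cosh_minus_cos)
  then show ?thesis by simp
qed

lemma sin_less_self:
  assumes "0 < x"
  shows "sin x < (x::real)"
proof (cases "x \<le> 1")
  case True
  have "cos (x/2) < 1"
    using cos_monotone_0_pi[of 0 "x/2"] assms True pi_gt3 by simp
  moreover have "0 < sin (x/2)"
    using sin_gt_zero[of "x/2"] assms True pi_gt3 by simp
  ultimately have "sin x < 2 * sin (x/2)"
    using sin_double[of "x/2"] by simp
  also have "\<dots> \<le> x"
    using sin_x_le_x[of "x/2"] assms by simp
  finally show ?thesis .
qed (use sin_le_one[of x] in linarith)

lemma sin_nonzero_between_multiples_pi: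
  assumes "real n * pi < x" "x < real (Suc n) * pi"
  shows "sin x \<noteq> 0"
proof
  assume "sin x = 0"
  then obtain i :: int where "x = of_int i * pi" by (auto simp: sin_zero_iff_int2)
  with assms have "of_int (int n) < (of_int i :: real)" "(of_int i :: real) < of_int (int n + 1)"
    by auto
  then have "int n < i" "i < int n + 1"
    by (simp_all only: of_int_less_iff)
  then show False by linarith
qed

section \<open>The Wronskian of sinh and sin\<close>

(* Its zeros are the solutions of tan t = tanh t. *)
definition wronsk :: "real \<Rightarrow> real" where
  "wronsk t = cos t * sinh t - sin t * cosh t"

definition sqdiff :: "real \<Rightarrow> real" where
  "sqdiff t = sinh t ^ 2 - sin t ^ 2"

lemma wronsk_0 [simp]: "wronsk 0 = 0"
  by (simp add: wronsk_def)

lemma wronsk_has_deriv: "(wronsk has_real_derivative - 2 * sin t * sinh t) (at t)"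
  unfolding wronsk_def[abs_def] by (rule derivative_eq_intros refl | simp)+

lemma sqdiff_has_deriv: "(sqdiff has_real_derivative 2 * (sinh t * cosh t - sin t * cos t)) (at t)"
  unfolding sqdiff_def[abs_def]
  by (rule derivative_eq_intros refl | simp add: power2_eq_square algebra_simps)+

lemma continuous_on_wronsk: "continuous_on S wronsk"
  using wronsk_has_deriv by (meson DERIV_isCont continuous_at_imp_continuous_on)

lemma wronsk_neg:
  assumes "0 < t" "t \<le> pi"
  shows "wronsk t < 0"
proof -
  have "wronsk t < wronsk 0"
  proof (rule DERIV_neg_imp_decreasing_open[OF \<open>0 < t\<close> _ continuous_on_wronsk])
    fix u assume "0 < u" "u < t"
    then have "0 < sin u * sinh u"
      using assms by (simp add: sin_gt_zero)
    then show "\<exists>y. (wronsk has_real_derivative y) (at u) \<and> y < 0"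
      using wronsk_has_deriv by force
  qed
  then show ?thesis by simp
qed

(* The next four lemmas integrate wronsk <= 0 on [0, pi] step by step, using
   (cos cosh)' = wronsk, (cos sinh + sin cosh)' = 2 cos cosh, (sin sinh)' = cos sinh + sin cosh
   and wronsk' = -2 sin sinh. *)
lemma cos_mult_cosh_le_one:
  assumes "0 \<le> t" "t \<le> pi"
  shows "cos t * cosh t \<le> 1"
proof -
  have "0 \<le> (\<lambda>u. 1 - cos u * cosh u) t"
  proof (rule nonneg_if_deriv_nonneg[where f="\<lambda>u. 1 - cos u * cosh u" and f'="\<lambda>u. - wronsk u"])
    show "((\<lambda>u. 1 - cos u * cosh u) has_real_derivative - wronsk u) (at u)" for u
      unfolding wronsk_def by (auto intro!: derivative_eq_intros)
    show "0 \<le> - wronsk u" if "0 \<le> u" "u \<le> t" for u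
      using wronsk_neg[of u] that assms by (cases "u = 0") auto
  qed (use assms in auto)
  then show ?thesis by simp
qed

lemma cos_sinh_plus_sin_cosh_le:
  assumes "0 \<le> t" "t \<le> pi"
  shows "cos t * sinh t + sin t * cosh t \<le> 2 * t"
proof -
  have "0 \<le> (\<lambda>u. 2 * u - (cos u * sinh u + sin u * cosh u)) t"
    by (rule nonneg_if_deriv_nonneg[where f'="\<lambda>u. 2 - 2 * (cos u * cosh u)"])
      (use assms cos_mult_cosh_le_one in \<open>auto intro!: derivative_eq_intros\<close>)
  then show ?thesis by simp
qed

lemma sin_mult_sinh_le_sq:
  assumes "0 \<le> t" "t \<le> pi"
  shows "sin t * sinh t \<le> t^2"
proof -
  have "0 \<le> (\<lambda>u. u^2 - sin u * sinh u) t"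
    by (rule nonneg_if_deriv_nonneg[where f'="\<lambda>u. 2 * u - (cos u * sinh u + sin u * cosh u)"])
      (use assms cos_sinh_plus_sin_cosh_le in \<open>auto intro!: derivative_eq_intros\<close>)
  then show ?thesis by simp
qed

lemma wronsk_ge:
  assumes "0 \<le> t" "t \<le> pi"
  shows "- (2 * t^3 / 3) \<le> wronsk t"
proof -
  have "0 \<le> (\<lambda>u. 2 * u^3 / 3 + wronsk u) t"
    by (rule nonneg_if_deriv_nonneg[where f'="\<lambda>u. 2 * u^2 - 2 * sin u * sinh u"])
      (use assms sin_mult_sinh_le_sq in
        \<open>auto intro!: derivative_eq_intros wronsk_has_deriv\<close>)
  then show ?thesis by simp
qed

lemma sqdiff_ge:
  assumes "0 \<le> t"
  shows "2 * t^4 / 3 \<le> sqdiff t"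
proof -
  have "(t^3/3) * (2*t) \<le> (sinh t - sin t) * (sinh t + sin t)"
    using assms third_cube_le_sinh_minus_sin[OF assms] double_le_sinh_plus_sin[OF assms]
      zero_le_power[OF assms, of 3]
    by (intro mult_mono) linarith+
  then show ?thesis
    by (simp add: sqdiff_def power2_eq_square power_numeral_reduce algebra_simps)
qed

lemma sqdiff_pos:
  assumes "0 < t"
  shows "0 < sqdiff t"
proof -
  have "0 < 2 * t^4 / 3" using assms by simp
  with sqdiff_ge[of t] assms show ?thesis by linarith
qed

lemma wronsk_pow4_less_sqdiff_cube_small:
  assumes "0 < t" "t \<le> 2"
  shows "wronsk t ^ 4 < sqdiff t ^ 3"
proof -
  have t: "t \<le> pi" using assms pi_gt3 by linarith
  have "wronsk t ^ 4 = (- wronsk t) ^ 4" by simp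
  also have "\<dots> \<le> (2 * t^3 / 3) ^ 4"
    using wronsk_ge[of t] wronsk_neg[of t] assms t by (intro power_mono) auto
  also have "\<dots> < (2 * t^4 / 3) ^ 3"
    using assms by (simp add: power_mult_distrib power_divide flip: power_mult)
  also have "\<dots> \<le> sqdiff t ^ 3"
    using sqdiff_ge[of t] assms by (intro power_mono) auto
  finally show ?thesis .
qed

lemma wronsk_pow4_less_sqdiff_cube_large:
  assumes "2 \<le> t"
  shows "wronsk t ^ 4 < sqdiff t ^ 3"
proof -
  define x where "x = sinh t ^ 2"
  have "10/3 \<le> sinh (2::real)" using x_plus_cube_le_sinh[of 2] by simp
  moreover have "sinh 2 \<le> sinh t" using assms by simp
  ultimately have "3 \<le> sinh t" by linarith
  then have x: "9 \<le> x"
    unfolding x_def using power_mono[of 3 "sinh t" 2] by simp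
  have "wronsk t ^ 2 + (sin t * sinh t + cos t * cosh t) ^ 2 = 2 * x + 1"
    unfolding wronsk_def x_def using sin_cos_squared_add[of t] cosh_square_eq[of t] by algebra
  then have "wronsk t ^ 2 \<le> 2 * x + 1"
    using zero_le_power2[of "sin t * sinh t + cos t * cosh t"] by linarith
  then have "wronsk t ^ 4 \<le> (2 * x + 1) ^ 2"
    using power_mono[of "wronsk t ^ 2" "2 * x + 1" 2] by (simp flip: power_mult)
  also have "\<dots> < (x - 1) ^ 3"
  proof -
    have "9 * x \<le> x * x" "2 * (x * x) \<le> (x - 7) * (x * x)"
      using x by (intro mult_right_mono; simp)+
    moreover have "(x - 1)^3 - (2 * x + 1)^2 = (x - 7) * (x * x) - x - 2"
      by (simp add: power2_eq_square power3_eq_cube algebra_simps)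
    ultimately show ?thesis using x by linarith
  qed
  also have "\<dots> \<le> sqdiff t ^ 3"
    using x sin_le_one[of t] abs_square_le_1[of "sin t"]
    by (intro power_mono) (auto simp: x_def sqdiff_def)
  finally show ?thesis .
qed

lemma wronsk_pow4_less_sqdiff_cube:
  "0 < t \<Longrightarrow> wronsk t ^ 4 < sqdiff t ^ 3"
  using wronsk_pow4_less_sqdiff_cube_small wronsk_pow4_less_sqdiff_cube_large
  by (cases "t \<le> 2") auto

section \<open>Zeros of the Wronskian\<close>

lemma wronsk_at_multiple_pi: "wronsk (real n * pi) = (-1)^n * sinh (real n * pi)"
  by (simp add: wronsk_def)

lemma cot_minus_coth_has_deriv:
  assumes "sin u \<noteq> 0" "u \<noteq> 0"
  shows "((\<lambda>u. cos u / sin u - cosh u / sinh u) has_real_derivative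
           - sqdiff u / (sin u ^ 2 * sinh u ^ 2)) (at u)"
proof -
  have pyth: "- sin u * sin u - cos u * cos u = -1" "sinh u * sinh u - cosh u * cosh u = -1"
    using sin_cos_squared_add3[of u] hyperbolic_pythagoras[of u]
    by (simp_all add: power2_eq_square algebra_simps)
  have "((\<lambda>u. cos u / sin u - cosh u / sinh u) has_real_derivative
          (- sin u * sin u - cos u * cos u) / (sin u * sin u)
          - (sinh u * sinh u - cosh u * cosh u) / (sinh u * sinh u)) (at u)"
    using assms by (auto intro!: derivative_eq_intros)
  then have "((\<lambda>u. cos u / sin u - cosh u / sinh u) has_real_derivative
          -1 / (sin u * sin u) - -1 / (sinh u * sinh u)) (at u)"
    by (simp only: pyth)
  then show ?thesis
    by (rule DERIV_cong) (use assms in \<open>simp add: sqdiff_def field_simps power2_eq_square\<close>)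
qed

lemma wronsk_eq_cot_minus_coth:
  assumes "sin t \<noteq> 0" "t \<noteq> 0"
  shows "wronsk t = sin t * sinh t * (cos t / sin t - cosh t / sinh t)"
  using assms by (simp add: wronsk_def field_simps)

lemma wronsk_at_most_one_zero_in_period:
  assumes "real n * pi < a" "a < b" "b < real (Suc n) * pi" "1 \<le> n" "wronsk a = 0"
  shows "wronsk b \<noteq> 0"
proof -
  let ?q = "\<lambda>u. cos u / sin u - cosh u / sinh u"
  have in_period: "sin u \<noteq> 0 \<and> 0 < u" if "a \<le> u" "u \<le> b" for u
  proof
    show "sin u \<noteq> 0"
      using that assms by (intro sin_nonzero_between_multiples_pi[of n]) auto
    have "0 < real n * pi" using assms(4) by simp
    then show "0 < u" using that assms by linarith
  qed
  have "?q b < ?q a"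
  proof (rule DERIV_neg_imp_decreasing[OF \<open>a < b\<close>])
    fix u assume "a \<le> u" "u \<le> b"
    with in_period have "sin u \<noteq> 0" "0 < u" by auto
    then show "\<exists>y. (?q has_real_derivative y) (at u) \<and> y < 0"
      using cot_minus_coth_has_deriv[of u] sqdiff_pos[of u] by force
  qed
  moreover have "?q a = 0"
    using wronsk_eq_cot_minus_coth[of a] in_period[of a] assms by simp
  ultimately show ?thesis
    using wronsk_eq_cot_minus_coth[of b] in_period[of b] assms by auto
qed

lemma wronsk_unique_zero_in_period:
  "\<exists>!t. real n * pi \<le> t \<and> t < real (Suc n) * pi \<and> wronsk t = 0"
proof (cases "n = 0")
  case True
  show ?thesis
  proof (rule ex1I[of _ 0])
    show "real n * pi \<le> 0 \<and> 0 < real (Suc n) * pi \<and> wronsk 0 = 0"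
      using True by simp
    fix t assume "real n * pi \<le> t \<and> t < real (Suc n) * pi \<and> wronsk t = 0"
    then show "t = 0"
      using True wronsk_neg[of t] by force
  qed
next
  case False
  then have n: "1 \<le> n" by simp
  have endpoint_nonzero: "wronsk (real n * pi) \<noteq> 0"
    using n by (simp add: wronsk_at_multiple_pi)
  have "wronsk (real n * pi) * wronsk (real (Suc n) * pi)
      = - (sinh (real n * pi) * sinh (real (Suc n) * pi))"
    by (cases "even n") (simp_all only: wronsk_at_multiple_pi power_Suc, simp_all)
  then have "wronsk (real n * pi) * wronsk (real (Suc n) * pi) < 0"
    using n by simp
  moreover have "real n * pi \<le> real (Suc n) * pi" by simp
  ultimately obtain t where t: "real n * pi < t" "t < real (Suc n) * pi" "wronsk t = 0"
    using zero_between_if_opposite_signs[OF _ continuous_on_wronsk] by blast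
  show ?thesis
  proof (rule ex1I[of _ t])
    fix u assume u: "real n * pi \<le> u \<and> u < real (Suc n) * pi \<and> wronsk u = 0"
    with endpoint_nonzero have "real n * pi < u" by (cases "u = real n * pi") auto
    show "u = t"
    proof (rule ccontr)
      assume "u \<noteq> t"
      then consider "u < t" | "t < u" by linarith
      then show False
      proof cases
        case 1
        then show False
          using wronsk_at_most_one_zero_in_period[OF \<open>real n * pi < u\<close> _ t(2) n] t u by blast
      next
        case 2
        then show False
          using wronsk_at_most_one_zero_in_period[OF t(1) _ _ n t(3)] u by blast
      qed
    qed
  qed (use t in auto)
qed

definition wronsk_zero :: "nat \<Rightarrow> real" where
  "wronsk_zero n = (THE t. real n * pi \<le> t \<and> t < real (Suc n) * pi \<and> wronsk t = 0)"

lemma wronsk_zero: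
  "real n * pi \<le> wronsk_zero n" "wronsk_zero n < real (Suc n) * pi" "wronsk (wronsk_zero n) = 0"
  using theI'[OF wronsk_unique_zero_in_period[of n]] unfolding wronsk_zero_def by auto

lemma wronsk_zero_0: "wronsk_zero 0 = 0"
  using wronsk_zero[of 0] wronsk_neg[of "wronsk_zero 0"] by fastforce

lemma wronsk_zero_nonneg: "0 \<le> wronsk_zero n"
  using wronsk_zero(1)[of n] by (meson order.trans zero_le_mult_iff of_nat_0_le_iff pi_ge_zero)

lemma strict_mono_wronsk_zero: "strict_mono wronsk_zero"
  unfolding strict_mono_Suc_iff using wronsk_zero(1,2) by (meson less_le_trans)

lemma nonneg_zeros_wronsk: "{t. 0 \<le> t \<and> wronsk t = 0} = range wronsk_zero"
proof (intro subset_antisym subsetI)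
  fix t assume t: "t \<in> {t. 0 \<le> t \<and> wronsk t = 0}"
  define n where "n = nat \<lfloor>t / pi\<rfloor>"
  have "real n \<le> t / pi" "t / pi < real n + 1"
    using t by (auto simp: n_def)
  then have "real n * pi \<le> t" "t < real (Suc n) * pi"
    by (simp_all add: field_simps)
  then have "t = wronsk_zero n"
    using t wronsk_unique_zero_in_period[of n] wronsk_zero[of n] by auto
  then show "t \<in> range wronsk_zero" by simp
next
  fix t assume "t \<in> range wronsk_zero"
  then show "t \<in> {t. 0 \<le> t \<and> wronsk t = 0}"
    using wronsk_zero(3) wronsk_zero_nonneg by auto
qed

lemma wronsk_nonzero_between_zeros:
  assumes "wronsk_zero k < t" "t < wronsk_zero (Suc k)"
  shows "0 < t" "wronsk t \<noteq> 0"
proof -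
  show "0 < t"
    using assms(1) wronsk_zero_nonneg[of k] by linarith
  show "wronsk t \<noteq> 0"
  proof
    assume "wronsk t = 0"
    with \<open>0 < t\<close> have "t \<in> {t. 0 \<le> t \<and> wronsk t = 0}" by simp
    then obtain j where "t = wronsk_zero j"
      unfolding nonneg_zeros_wronsk by blast
    with assms have "k < j" "j < Suc k"
      using strict_mono_wronsk_zero by (auto simp: strict_mono_less)
    then show False by simp
  qed
qed

section \<open>Zeros and continuity of mu\<close>

definition mu_denom :: "real \<Rightarrow> real" where
  "mu_denom t = t * sqdiff t - sin t * sinh t * wronsk t"

lemma double_mu_denom:
  "2 * mu_denom t = sin t ^ 2 * (sinh (2*t) - 2*t) + sinh t ^ 2 * (2*t - sin (2*t))"
  unfolding mu_denom_def wronsk_def sqdiff_def sin_double sinh_double by algebra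

lemma mu_double: "mu (2 * t) = wronsk t ^ 2 / mu_denom t"
proof -
  have "cosh (2*t) - cos (2*t) - sin (2*t) * sinh (2*t) = 2 * wronsk t ^ 2"
    unfolding wronsk_def cos_double sin_double sinh_double cosh_double
    using sin_cos_squared_add[of t] cosh_square_eq[of t] by algebra
  moreover have "sin t ^ 2 * (sinh (2*t) - 2*t) - sinh t ^ 2 * (sin (2*t) - 2*t) = 2 * mu_denom t"
    by (subst double_mu_denom) (simp add: algebra_simps)
  ultimately show ?thesis
    by (simp add: mu_def wronsk_def)
qed

lemma mu_eq: "mu x = wronsk (x/2) ^ 2 / mu_denom (x/2)"
  using mu_double[of "x/2"] by simp

lemma mu_denom_pos:
  assumes "0 < t"
  shows "0 < mu_denom t"
proof -
  have "0 \<le> sin t ^ 2 * (sinh (2*t) - 2*t)"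
    using x_le_sinh[of "2*t"] assms by simp
  moreover have "0 < sinh t ^ 2 * (2*t - sin (2*t))"
    using sin_less_self[of "2*t"] assms by simp
  ultimately show ?thesis
    using double_mu_denom[of t] by linarith
qed

lemma mu_nonneg:
  assumes "0 \<le> x"
  shows "0 \<le> mu x"
  using mu_denom_pos[of "x/2"] assms by (cases "x = 0") (simp_all add: mu_eq)

lemma mu_eq_0_iff:
  assumes "0 \<le> x"
  shows "mu x = 0 \<longleftrightarrow> wronsk (x/2) = 0"
  using mu_denom_pos[of "x/2"] assms by (cases "x = 0") (simp_all add: mu_eq)

lemma nonneg_zeros_mu: "{x. 0 \<le> x \<and> mu x = 0} = range (\<lambda>k. 2 * wronsk_zero k)"
proof (intro subset_antisym subsetI)
  fix x assume "x \<in> {x. 0 \<le> x \<and> mu x = 0}"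
  then have "x / 2 \<in> {t. 0 \<le> t \<and> wronsk t = 0}"
    using mu_eq_0_iff[of x] by simp
  then have "x / 2 \<in> range wronsk_zero"
    by (simp only: nonneg_zeros_wronsk)
  then show "x \<in> range (\<lambda>k. 2 * wronsk_zero k)"
    by (auto simp: image_iff field_simps)
next
  fix x assume "x \<in> range (\<lambda>k. 2 * wronsk_zero k)"
  then obtain k where "x = 2 * wronsk_zero k" by blast
  then show "x \<in> {x. 0 \<le> x \<and> mu x = 0}"
    using wronsk_zero(3)[of k] wronsk_zero_nonneg[of k] by (simp add: mu_eq_0_iff)
qed

lemma mu_tendsto_0: "(mu \<longlongrightarrow> 0) (at_right 0)"
proof -
  \<comment> \<open>real_asymp cannot see through the case distinction in mu_def\<close>
  have "((\<lambda>x::real. (cosh x - cos x - sin x * sinh x) /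
      ((sin (x/2))^2 * (sinh x - x) - (sinh (x/2))^2 * (sin x - x))) \<longlongrightarrow> 0) (at_right 0)"
    by real_asymp
  moreover have "eventually (\<lambda>x. (cosh x - cos x - sin x * sinh x) /
      ((sin (x/2))^2 * (sinh x - x) - (sinh (x/2))^2 * (sin x - x)) = mu x) (at_right 0)"
    by (simp add: eventually_at_right_less mu_def)
  ultimately show ?thesis
    by (rule Lim_transform_eventually)
qed

lemma mu_denom_has_deriv:
  "(mu_denom has_real_derivative 2 * t * (sinh t * cosh t - sin t * cos t) + 4 * (sin t * sinh t) ^ 2) (at t)"
proof -
  have "(mu_denom has_real_derivative
      sqdiff t + t * (2 * (sinh t * cosh t - sin t * cos t))
      - ((cos t * sinh t + sin t * cosh t) * wronsk t + sin t * sinh t * (- 2 * sin t * sinh t))) (at t)"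
    unfolding mu_denom_def[abs_def]
    by (rule derivative_eq_intros sqdiff_has_deriv wronsk_has_deriv refl | simp add: algebra_simps)+
  moreover have "sqdiff t = 2 * (sin t * sinh t) ^ 2 + (cos t * sinh t + sin t * cosh t) * wronsk t"
    unfolding sqdiff_def wronsk_def
    using sin_cos_squared_add[of t] cosh_square_eq[of t] by algebra
  ultimately show ?thesis
    by (simp add: algebra_simps power2_eq_square)
qed

lemma mu_has_deriv_double:
  assumes "0 < t"
  shows "(mu has_real_derivative
           t * wronsk t * (2 * sqdiff t * (- 2 * sin t * sinh t)
             - wronsk t * (2 * (sinh t * cosh t - sin t * cos t))) / (2 * mu_denom t ^ 2)) (at (2 * t))"
proof -
  let ?phi = "\<lambda>t. wronsk t ^ 2 / mu_denom t"
  let ?N = "2 * wronsk t * (- 2 * sin t * sinh t) * mu_denom t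
    - wronsk t ^ 2 * (2 * t * (sinh t * cosh t - sin t * cos t) + 4 * (sin t * sinh t) ^ 2)"
  have "(?phi has_real_derivative ?N / (mu_denom t * mu_denom t)) (at ((2 * t) / 2))"
    using mu_denom_pos[OF assms]
    by (auto intro!: derivative_eq_intros wronsk_has_deriv mu_denom_has_deriv)
  moreover have "((\<lambda>x. x / 2) has_real_derivative 1 / 2) (at (2 * t))"
    by (rule derivative_eq_intros refl | simp)+
  ultimately have "((\<lambda>x. ?phi (x / 2)) has_real_derivative
      ?N / (mu_denom t * mu_denom t) * (1 / 2)) (at (2 * t))"
    by (rule DERIV_chain2)
  moreover have "mu = (\<lambda>x. ?phi (x / 2))"
    by (simp add: mu_eq[abs_def])
  moreover have "?N = t * wronsk t * (2 * sqdiff t * (- 2 * sin t * sinh t)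
             - wronsk t * (2 * (sinh t * cosh t - sin t * cos t)))"
    unfolding mu_denom_def by algebra
  ultimately show ?thesis
    by (simp add: power2_eq_square ac_simps)
qed

lemma continuous_on_mu: "continuous_on {0..} mu"
proof -
  have "isCont mu x" if "0 < x" for x
    using mu_has_deriv_double[of "x/2"] that by (auto intro: DERIV_isCont)
  moreover have "continuous (at 0 within {0..}) mu"
    using mu_tendsto_0 by (simp add: continuous_within at_within_Ici_at_right mu_def)
  ultimately show ?thesis
    by (metis atLeast_iff continuous_at_imp_continuous_within continuous_on_eq_continuous_within
        order_le_less)
qed

section \<open>Critical points of mu\<close>

(* The logarithmic derivative of |wronsk| / sqrt sqdiff. *)
definition ratio_log_deriv :: "real \<Rightarrow> real" where
  "ratio_log_deriv t = - 2 * sin t * sinh t / wronsk t - (sinh t * cosh t - sin t * cos t) / sqdiff t"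

lemma mu_has_deriv_ratio_log_deriv:
  assumes "0 < t" "wronsk t \<noteq> 0"
  shows "\<exists>c>0. (mu has_real_derivative c * ratio_log_deriv t) (at (2 * t))"
proof (intro exI conjI)
  have E: "0 < sqdiff t" and D: "0 < mu_denom t"
    using sqdiff_pos mu_denom_pos assms by auto
  then show "0 < t * wronsk t ^ 2 * sqdiff t / mu_denom t ^ 2"
    using assms by simp
  have "t * wronsk t * (2 * sqdiff t * (- 2 * sin t * sinh t)
          - wronsk t * (2 * (sinh t * cosh t - sin t * cos t))) / (2 * mu_denom t ^ 2)
      = t * wronsk t ^ 2 * sqdiff t / mu_denom t ^ 2 * ratio_log_deriv t"
    using E D assms by (simp add: ratio_log_deriv_def field_simps power2_eq_square)
  with mu_has_deriv_double[OF assms(1)]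
  show "(mu has_real_derivative
      t * wronsk t ^ 2 * sqdiff t / mu_denom t ^ 2 * ratio_log_deriv t) (at (2 * t))"
    by simp
qed

lemma ratio_log_deriv_has_deriv:
  assumes "wronsk t \<noteq> 0" "sqdiff t \<noteq> 0"
  shows "(ratio_log_deriv has_real_derivative
           - 2 * sqdiff t / wronsk t ^ 2 + 2 * wronsk t ^ 2 / sqdiff t ^ 2) (at t)"
proof -
  have pyth: "cos t ^ 2 = 1 - sin t ^ 2" "cosh t ^ 2 = 1 + sinh t ^ 2"
    by (simp_all add: cos_squared_eq cosh_square_eq)
  have num: "((\<lambda>t. - 2 * sin t * sinh t) has_real_derivative
      - 2 * (cos t * sinh t + sin t * cosh t)) (at t)"
    by (rule derivative_eq_intros refl | simp add: algebra_simps)+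
  have half_sqdiff: "((\<lambda>t. sinh t * cosh t - sin t * cos t) has_real_derivative
      cosh t ^ 2 + sinh t ^ 2 - cos t ^ 2 + sin t ^ 2) (at t)"
    by (rule derivative_eq_intros refl | simp add: power2_eq_square)+
  have "(ratio_log_deriv has_real_derivative
      (- 2 * (cos t * sinh t + sin t * cosh t) * wronsk t - (- 2 * sin t * sinh t) * (- 2 * sin t * sinh t))
        / (wronsk t * wronsk t)
      - ((cosh t ^ 2 + sinh t ^ 2 - cos t ^ 2 + sin t ^ 2) * sqdiff t
          - (sinh t * cosh t - sin t * cos t) * (2 * (sinh t * cosh t - sin t * cos t)))
        / (sqdiff t * sqdiff t)) (at t)"
    unfolding ratio_log_deriv_def[abs_def]
    by (rule DERIV_diff[OF DERIV_divide[OF num wronsk_has_deriv] DERIV_divide[OF half_sqdiff sqdiff_has_deriv]])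
      (use assms in auto)
  moreover have "- 2 * (cos t * sinh t + sin t * cosh t) * wronsk t
      - (- 2 * sin t * sinh t) * (- 2 * sin t * sinh t) = - 2 * sqdiff t"
    unfolding wronsk_def sqdiff_def using pyth by algebra
  moreover have "(cosh t ^ 2 + sinh t ^ 2 - cos t ^ 2 + sin t ^ 2) * sqdiff t
      - (sinh t * cosh t - sin t * cos t) * (2 * (sinh t * cosh t - sin t * cos t))
      = - 2 * wronsk t ^ 2"
    unfolding wronsk_def sqdiff_def using pyth by algebra
  ultimately show ?thesis
    by (simp add: power2_eq_square)
qed

lemma ratio_log_deriv_has_neg_deriv:
  assumes "0 < t" "wronsk t \<noteq> 0"
  shows "\<exists>y. (ratio_log_deriv has_real_derivative y) (at t) \<and> y < 0"
proof (intro exI conjI)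
  have E: "0 < sqdiff t" using sqdiff_pos assms by simp
  then show "(ratio_log_deriv has_real_derivative
           - 2 * sqdiff t / wronsk t ^ 2 + 2 * wronsk t ^ 2 / sqdiff t ^ 2) (at t)"
    using ratio_log_deriv_has_deriv assms by simp
  have "wronsk t ^ 2 * wronsk t ^ 2 < sqdiff t * sqdiff t ^ 2"
    using wronsk_pow4_less_sqdiff_cube[OF assms(1)] by (simp flip: power_add power_Suc)
  then have "wronsk t ^ 2 / sqdiff t ^ 2 < sqdiff t / wronsk t ^ 2"
    using E assms by (simp add: divide_simps)
  then show "- 2 * sqdiff t / wronsk t ^ 2 + 2 * wronsk t ^ 2 / sqdiff t ^ 2 < 0"
    by simp
qed

lemma ratio_log_deriv_decreasing_between_zeros:
  assumes "wronsk_zero k < x" "x < y" "y < wronsk_zero (Suc k)"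
  shows "ratio_log_deriv y < ratio_log_deriv x"
proof (rule DERIV_neg_imp_decreasing[OF \<open>x < y\<close>])
  fix u assume "x \<le> u" "u \<le> y"
  with assms show "\<exists>d. (ratio_log_deriv has_real_derivative d) (at u) \<and> d < 0"
    using wronsk_nonzero_between_zeros[of k u] ratio_log_deriv_has_neg_deriv[of u] by simp
qed

lemma mu_unimodal_between_zeros:
  fixes k :: nat
  defines "a \<equiv> 2 * wronsk_zero k" and "b \<equiv> 2 * wronsk_zero (Suc k)"
  shows "(\<exists>!m. a < m \<and> m < b \<and> (mu has_real_derivative 0) (at m)) \<and>
         (\<forall>m. a < m \<and> m < b \<and> (mu has_real_derivative 0) (at m) \<longrightarrow>
              strict_mono_on {a..m} mu \<and> strict_antimono_on {m..b} mu)"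
proof (rule unimodal_if_deriv_sign_decreasing[where g = "\<lambda>x. ratio_log_deriv (x / 2)"])
  show "a < b"
    using strict_mono_wronsk_zero by (simp add: a_def b_def strict_mono_def)
  have "a \<in> {x. 0 \<le> x \<and> mu x = 0}" "b \<in> {x. 0 \<le> x \<and> mu x = 0}"
    unfolding nonneg_zeros_mu a_def b_def by auto
  then show "continuous_on {a..b} mu" "mu a = mu b"
    by (auto intro: continuous_on_subset[OF continuous_on_mu])
  show "\<exists>c>0. (mu has_real_derivative c * ratio_log_deriv (x / 2)) (at x)" if "a < x" "x < b" for x
    using that wronsk_nonzero_between_zeros[of k "x/2"] mu_has_deriv_ratio_log_deriv[of "x/2"]
    by (simp add: a_def b_def)
  show "ratio_log_deriv (y / 2) < ratio_log_deriv (x / 2)" if "a < x" "x < y" "y < b" for x y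
    using that ratio_log_deriv_decreasing_between_zeros[of k "x/2" "y/2"] by (simp add: a_def b_def)
qed

theorem mainTheorem6:
  shows "(\<forall>x\<ge>0. mu x \<ge> 0) \<and>
    (\<exists>s :: nat \<Rightarrow> real. s 0 = 0 \<and> strict_mono s \<and>
       {x. x \<ge> 0 \<and> mu x = 0} = range s \<and>
       (\<forall>k. (\<exists>!m. s k < m \<and> m < s (Suc k) \<and> (mu has_real_derivative 0) (at m)) \<and>
            (\<forall>m. s k < m \<and> m < s (Suc k) \<and> (mu has_real_derivative 0) (at m) \<longrightarrow>
                 strict_mono_on {s k..m} mu \<and> strict_antimono_on {m..s (Suc k)} mu)))"
proof (intro conjI allI impI exI[of _ "\<lambda>k. 2 * wronsk_zero k"])
  show "0 \<le> mu x" if "0 \<le> x" for x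
    using mu_nonneg that .
  show "2 * wronsk_zero 0 = 0"
    by (simp add: wronsk_zero_0)
  show "strict_mono (\<lambda>k. 2 * wronsk_zero k)"
    using strict_mono_wronsk_zero by (simp add: strict_mono_def)
  show "{x. 0 \<le> x \<and> mu x = 0} = range (\<lambda>k. 2 * wronsk_zero k)"
    by (rule nonneg_zeros_mu)
qed (use mu_unimodal_between_zeros in blast)+

end
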